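(* Let $t\geqslant 2$ be an integer, let $r\in\{2t,2t+1\}$, and let $n\geqslant 2r$. Then $$N(n,2r,r)=\begin{cases}\binom{2t}{t}, & \text{if } r=2t,\\[2pt] 2\binom{2t-2}{t-1}, & \text{if } r=2t+1.\end{cases}$$
   Context: $\mathrm{Sym}_n$ is the symmetric group of permutations of $[n]=\{1,\dots,n\}$, and $I_n$ is the identity permutation. The Hamming distance between $\pi,\tau\in\mathrm{Sym}_n$ is $d(\pi,\tau)=|\{i\in[n]:\pi(i)\neq\tau(i)\}|$. The ball of radius $r$ is $B_r(\pi)=\{\tau\in\mathrm{Sym}_n: d(\pi,\tau)\leqslant r\}$. For integers $d,r$ define $I(n,d,r)=\max_{\pi,\tau\in\mathrm{Sym}_n,\ d(\pi,\tau)=d}|B_r(\pi)\cap B_r(\tau)|$ (taken to be $0$ if the intersections are all empty) and $N(n,d,r)=\max_{\pi,\tau\in\mathrm{Sym}_n,\ d(\pi,\tau)\geqslant d}|B_r(\pi)\cap B_r(\tau)|=\max_{k\geqslant d}I(n,k,r)$. *)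

theory Defs
  imports Main "HOL-Combinatorics.Permutations"
begin

definition Sym :: "nat \<Rightarrow> (nat \<Rightarrow> nat) set" where
  "Sym n = {p. p permutes {1..n}}"

definition hdist :: "nat \<Rightarrow> (nat \<Rightarrow> nat) \<Rightarrow> (nat \<Rightarrow> nat) \<Rightarrow> nat" where
  "hdist n p q = card {i \<in> {1..n}. p i \<noteq> q i}"

definition ball_perm :: "nat \<Rightarrow> nat \<Rightarrow> (nat \<Rightarrow> nat) \<Rightarrow> (nat \<Rightarrow> nat) set" where
  "ball_perm n r p = {q \<in> Sym n. hdist n p q \<le> r}"

definition Iint :: "nat \<Rightarrow> nat \<Rightarrow> nat \<Rightarrow> nat" where
  "Iint n d r = Max (insert 0 {card (ball_perm n r p \<inter> ball_perm n r q) | p q.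
      p \<in> Sym n \<and> q \<in> Sym n \<and> hdist n p q = d})"

definition Nint :: "nat \<Rightarrow> nat \<Rightarrow> nat \<Rightarrow> nat" where
  "Nint n d r = Max (insert 0 {card (ball_perm n r p \<inter> ball_perm n r q) | p q.
      p \<in> Sym n \<and> q \<in> Sym n \<and> d \<le> hdist n p q})"

end

theory Submission
  imports Defs "HOL-Combinatorics.Multiset_Permutations" "HOL-Combinatorics.Orbits"
begin

text \<open>Let \<rho> = p\<inverse> \<circ> q. A permutation s in both balls of radius r around p and q, where
  p and q are at distance at least 2r, agrees with q on an r-element set A and with p elsewhere,
  and A is invariant under \<rho>. So A is a union of cycles of \<rho> on its 2r-element support, all
  of length at least 2, and the intersection injects into the families of cycles of total length
  r. These families form an antichain, and Sperner's theorem bounds their number by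
  \<open>C(2t, t)\<close> for r = 2t; for r = 2t + 1 a parity argument gives \<open>2 C(2t - 2, t - 1)\<close>.
  Taking p = id and for q the permutations (1 2)(3 4)\<dots>(4t-1 4t), respectively
  (1 2 3)(4 5 6)(7 8)\<dots>(4t+1 4t+2), every family of total length r is realised.\<close>

section \<open>Sperner's theorem\<close>

lemma card_permutations_of_set_prefix:
  assumes "finite X" "A \<subseteq> X"
  shows "card {xs \<in> permutations_of_set X. set (take (card A) xs) = A}
           = fact (card A) * fact (card X - card A)"
proof -
  define k where "k = card A"
  have finA: "finite A" using assms finite_subset by blast
  have "bij_betw (\<lambda>xs. (take k xs, drop k xs))
          {xs \<in> permutations_of_set X. set (take k xs) = A}
          (permutations_of_set A \<times> permutations_of_set (X - A))"
  proof (rule bij_betwI[where g = "\<lambda>(u, v). u @ v"])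
    show "(\<lambda>xs. (take k xs, drop k xs)) \<in> {xs \<in> permutations_of_set X. set (take k xs) = A}
            \<rightarrow> permutations_of_set A \<times> permutations_of_set (X - A)"
    proof
      fix xs assume "xs \<in> {xs \<in> permutations_of_set X. set (take k xs) = A}"
      hence xs: "set xs = X" "distinct xs" "set (take k xs) = A"
        by (auto simp: permutations_of_set_def)
      have "distinct (take k xs @ drop k xs)" using xs by simp
      hence "set (take k xs) \<inter> set (drop k xs) = {}" by (simp only: distinct_append)
      moreover have "set (take k xs) \<union> set (drop k xs) = X"
        using xs by (metis set_append append_take_drop_id)
      ultimately have "set (drop k xs) = X - A" using xs by auto
      thus "(take k xs, drop k xs) \<in> permutations_of_set A \<times> permutations_of_set (X - A)"
        using xs by (auto simp: permutations_of_set_def)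
    qed
    show "(\<lambda>(u, v). u @ v) \<in> permutations_of_set A \<times> permutations_of_set (X - A)
            \<rightarrow> {xs \<in> permutations_of_set X. set (take k xs) = A}"
      using assms(2) by (auto simp: permutations_of_set_def k_def distinct_card[symmetric])
    show "\<And>y. y \<in> permutations_of_set A \<times> permutations_of_set (X - A) \<Longrightarrow>
            (take k (case y of (u, v) \<Rightarrow> u @ v), drop k (case y of (u, v) \<Rightarrow> u @ v)) = y"
      by (auto simp: permutations_of_set_def k_def distinct_card[symmetric])
  qed simp
  hence "card {xs \<in> permutations_of_set X. set (take k xs) = A}
           = fact (card A) * fact (card (X - A))"
    using assms finA by (simp add: bij_betw_same_card card_cartesian_product)
  thus ?thesis using assms finA by (simp add: k_def card_Diff_subset)
qed

text \<open>Lubell's proof: every member A of an antichain is the set of the first card A entries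
  of fact (card A) * fact (card X - card A) orderings of X, and no ordering serves two members.\<close>

lemma sperner:
  assumes fin: "finite X" and "F \<subseteq> Pow X"
    and antichain: "\<And>A B. A \<in> F \<Longrightarrow> B \<in> F \<Longrightarrow> A \<subseteq> B \<Longrightarrow> A = B"
  shows "card F \<le> card X choose (card X div 2)"
proof -
  define n where "n = card X"
  define L where "L A = {xs \<in> permutations_of_set X. set (take (card A) xs) = A}" for A
  have AX: "A \<subseteq> X" if "A \<in> F" for A using that assms(2) by auto
  have finF: "finite F" using assms(2) fin by (meson finite_Pow_iff finite_subset)
  have disjoint: "L A \<inter> L B = {}" if "A \<in> F" "B \<in> F" "A \<noteq> B" for A B
  proof (rule ccontr)
    assume "L A \<inter> L B \<noteq> {}"
    then obtain xs where "set (take (card A) xs) = A" "set (take (card B) xs) = B"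
      by (auto simp: L_def)
    moreover have "set (take i xs) \<subseteq> set (take j xs)" if "i \<le> j" for i j
      using that by (metis min.absorb1 set_take_subset take_take)
    ultimately show False using antichain that by (metis nat_le_linear)
  qed
  have "(\<Sum>A\<in>F. card (L A)) = card (\<Union>A\<in>F. L A)"
    using finF disjoint by (subst card_UN_disjoint) (auto simp: L_def)
  also have "\<dots> \<le> card (permutations_of_set X)"
    by (rule card_mono) (auto simp: L_def)
  finally have total: "(\<Sum>A\<in>F. card (L A)) \<le> fact n" using fin by (simp add: n_def)
  have each: "fact n \<le> (n choose (n div 2)) * card (L A)" if "A \<in> F" for A
  proof -
    have kn: "card A \<le> n" using AX[OF that] fin by (simp add: n_def card_mono)
    have "fact n = (n choose card A) * (fact (card A) * fact (n - card A))"
      using binomial_fact_lemma[OF kn] by (simp add: ac_simps)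
    also have "\<dots> \<le> (n choose (n div 2)) * (fact (card A) * fact (n - card A))"
      by (intro mult_le_mono1 binomial_maximum)
    finally show ?thesis
      using card_permutations_of_set_prefix[OF fin AX[OF that]] by (simp add: L_def n_def)
  qed
  have "card F * fact n = (\<Sum>A\<in>F. fact n)" by simp
  also have "\<dots> \<le> (\<Sum>A\<in>F. (n choose (n div 2)) * card (L A))"
    by (rule sum_mono) (rule each)
  also have "\<dots> \<le> (n choose (n div 2)) * fact n"
    using total by (simp add: sum_distrib_left[symmetric])
  finally show ?thesis by (simp add: n_def)
qed

lemma central_binomial_mono: "m \<le> m' \<Longrightarrow> m choose (m div 2) \<le> m' choose (m' div 2)"
  using binomial_right_mono[of m m' "m div 2"] binomial_maximum[of m' "m div 2"] by linarith

section \<open>Subfamilies of prescribed weight\<close>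

definition subsets_of_weight :: "('a \<Rightarrow> nat) \<Rightarrow> 'a set \<Rightarrow> nat \<Rightarrow> 'a set set" where
  "subsets_of_weight w P r = {Q. Q \<subseteq> P \<and> sum w Q = r}"

lemma finite_subsets_of_weight: "finite P \<Longrightarrow> finite (subsets_of_weight w P r)"
  by (simp add: subsets_of_weight_def)

lemma subsets_of_weight_antichain:
  assumes "finite P" "\<forall>b\<in>P. 0 < w b"
    and "Q \<in> subsets_of_weight w P r" "Q' \<in> subsets_of_weight w P r" "Q \<subseteq> Q'"
  shows "Q = Q'"
proof -
  have "finite Q'" "Q' \<subseteq> P" using assms finite_subset by (auto simp: subsets_of_weight_def)
  hence "sum w Q' = sum w Q + sum w (Q' - Q)"
    using assms(5) by (metis add.commute sum.subset_diff)
  hence "sum w (Q' - Q) = 0" using assms(3,4) by (simp add: subsets_of_weight_def)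
  hence "\<forall>b\<in>Q' - Q. w b = 0" using \<open>finite Q'\<close> by simp
  thus ?thesis using assms(2,5) \<open>Q' \<subseteq> P\<close> by (metis DiffI less_not_refl subsetD subset_antisym subsetI)
qed

lemma card_subsets_of_weight_le_central:
  assumes "finite P" "\<forall>b\<in>P. 0 < w b" "card P \<le> k"
  shows "card (subsets_of_weight w P r) \<le> k choose (k div 2)"
proof -
  have "card (subsets_of_weight w P r) \<le> card P choose (card P div 2)"
    using subsets_of_weight_antichain[OF assms(1,2)]
    by (intro sperner[OF assms(1)]) (auto simp: subsets_of_weight_def)
  also have "\<dots> \<le> k choose (k div 2)" by (rule central_binomial_mono[OF assms(3)])
  finally show ?thesis .
qed

lemma twice_card_le_sum:
  assumes "\<forall>b\<in>A. 2 \<le> (w::'a \<Rightarrow> nat) b"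
  shows "2 * card A \<le> sum w A"
  using sum_mono[of A "\<lambda>_. 2" w] assms by (simp add: mult.commute)

lemma card_subsets_of_weight_le_avoiding:
  assumes "finite P" "b \<in> P" "sum w P = 2 * r"
  shows "card (subsets_of_weight w P r) \<le> 2 * card (subsets_of_weight w (P - {b}) r)"
proof -
  define G where "G = subsets_of_weight w P r"
  define G0 where "G0 = subsets_of_weight w (P - {b}) r"
  have G: "G = G0 \<union> {Q \<in> G. b \<in> Q}" by (auto simp: G_def G0_def subsets_of_weight_def)
  have "card {Q \<in> G. b \<in> Q} \<le> card G0"
  proof (rule card_inj_on_le)
    show "inj_on (\<lambda>Q. P - Q) {Q \<in> G. b \<in> Q}"
      by (rule inj_onI) (auto simp: G_def subsets_of_weight_def)
    show "(\<lambda>Q. P - Q) ` {Q \<in> G. b \<in> Q} \<subseteq> G0"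
    proof clarify
      fix Q assume "Q \<in> G" "b \<in> Q"
      hence "Q \<subseteq> P" "sum w Q = r" by (auto simp: G_def subsets_of_weight_def)
      moreover have "sum w P = sum w Q + sum w (P - Q)"
        using assms(1) \<open>Q \<subseteq> P\<close> by (metis add.commute sum.subset_diff)
      ultimately show "P - Q \<in> G0"
        using assms(3) \<open>b \<in> Q\<close> by (auto simp: G0_def subsets_of_weight_def)
    qed
    show "finite G0" using assms(1) by (simp add: G0_def finite_subsets_of_weight)
  qed
  moreover have "finite G0" using assms(1) by (simp add: G0_def finite_subsets_of_weight)
  ultimately have "card G \<le> card G0 + card G0" by (metis G card_Un_le le_trans add_left_mono)
  thus ?thesis by (simp add: G_def G0_def)
qed

lemma card_subsets_of_weight_two_three:
  assumes "finite R" "\<forall>b\<in>R. w b = 2" "e \<notin> R" "w e = 3"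
  shows "card (subsets_of_weight w (insert e R) (2 * t + 1)) \<le> card R choose (t - 1)"
proof -
  have weight: "sum w Q = 2 * card (Q - {e}) + (if e \<in> Q then 3 else 0)"
    if "Q \<subseteq> insert e R" for Q
  proof -
    have "finite Q" using that assms(1) finite_subset by blast
    hence "sum w Q = sum w (Q - {e}) + (if e \<in> Q then w e else 0)"
      by (cases "e \<in> Q") (auto simp: sum.remove)
    moreover have "sum w (Q - {e}) = sum (\<lambda>_. 2) (Q - {e})"
      using that assms(2) by (intro sum.cong) auto
    ultimately show ?thesis using assms(4) by simp
  qed
  have "card (subsets_of_weight w (insert e R) (2 * t + 1)) \<le> card {S. S \<subseteq> R \<and> card S = t - 1}"
  proof (rule card_inj_on_le)
    show "inj_on (\<lambda>Q. Q - {e}) (subsets_of_weight w (insert e R) (2 * t + 1))"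
    proof (rule inj_onI)
      fix Q Q' assume "Q \<in> subsets_of_weight w (insert e R) (2 * t + 1)"
        "Q' \<in> subsets_of_weight w (insert e R) (2 * t + 1)" "Q - {e} = Q' - {e}"
      moreover have "e \<in> Q" if "Q \<in> subsets_of_weight w (insert e R) (2 * t + 1)" for Q
        using that weight[of Q] by (auto simp: subsets_of_weight_def split: if_splits) presburger
      ultimately show "Q = Q'" by blast
    qed
    show "(\<lambda>Q. Q - {e}) ` subsets_of_weight w (insert e R) (2 * t + 1) \<subseteq> {S. S \<subseteq> R \<and> card S = t - 1}"
    proof clarify
      fix Q assume "Q \<in> subsets_of_weight w (insert e R) (2 * t + 1)"
      hence "Q \<subseteq> insert e R" "2 * card (Q - {e}) + (if e \<in> Q then 3 else 0) = 2 * t + 1"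
        using weight by (auto simp: subsets_of_weight_def)
      thus "Q - {e} \<subseteq> R \<and> card (Q - {e}) = t - 1" by (auto split: if_splits) presburger
    qed
    show "finite {S. S \<subseteq> R \<and> card S = t - 1}" using assms(1) by simp
  qed
  thus ?thesis using n_subsets[OF assms(1)] by simp
qed

lemma weight_two_if_sum_le_twice_card:
  assumes "finite R" "\<forall>b\<in>R. 2 \<le> (w::'a \<Rightarrow> nat) b" "sum w R \<le> 2 * card R"
  shows "\<forall>b\<in>R. w b = 2"
proof -
  have "sum w R = sum (\<lambda>b. (w b - 2) + 2) R" using assms(2) by (intro sum.cong) auto
  also have "\<dots> = sum (\<lambda>b. w b - 2) R + 2 * card R" by (subst sum.distrib) simp
  finally have "sum (\<lambda>b. w b - 2) R = 0" using assms(3) by simp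
  thus ?thesis using assms(1,2) by (simp add: le_antisym)
qed

lemma odd_weight_member: "odd (sum w Q) \<Longrightarrow> \<exists>b\<in>Q. odd ((w::'a \<Rightarrow> nat) b)"
  by (meson dvd_sum)

lemma card_half_weight_subsets_le:
  assumes "finite P" "\<forall>b\<in>P. 2 \<le> w b" "sum w P = 2 * r"
  shows "card (subsets_of_weight w P r) \<le> r choose (r div 2)"
  using assms twice_card_le_sum[OF assms(2)]
  by (intro card_subsets_of_weight_le_central) auto

lemma card_subsets_of_weight_avoiding_odd_le:
  assumes fin: "finite P" and two: "\<forall>b\<in>P. 2 \<le> w b" and total: "sum w P = 2 * (2 * t + 1)"
    and b: "b \<in> P" "odd (w b)" and e: "e \<in> P" "e \<noteq> b" "odd (w e)" and "2 * t \<le> card P"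
  shows "card (subsets_of_weight w (P - {b}) (2 * t + 1)) \<le> (2 * t - 2) choose (t - 1)"
proof -
  define R where "R = P - {b, e}"
  have finR: "finite R" and twoR: "\<forall>b\<in>R. 2 \<le> w b" using fin two by (auto simp: R_def)
  have "sum w P = w b + sum w (P - {b})" using fin b(1) by (rule sum.remove)
  also have "sum w (P - {b}) = w e + sum w (P - {b} - {e})" using fin e by (intro sum.remove) auto
  also have "P - {b} - {e} = R" by (auto simp: R_def)
  finally have "sum w P = w b + w e + sum w R" by simp
  moreover have "card R = card P - 2" using fin b e by (simp add: R_def card_Diff_subset)
  moreover have "3 \<le> w b" "3 \<le> w e" using b e two by (auto elim!: oddE)
  ultimately have we: "w e = 3" and cardR: "card R = 2 * t - 2" and sumR: "sum w R \<le> 2 * card R"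
    using twice_card_le_sum[OF twoR] total \<open>2 * t \<le> card P\<close> by arith+
  have twoR': "\<forall>b\<in>R. w b = 2" by (rule weight_two_if_sum_le_twice_card[OF finR twoR sumR])
  have eR: "e \<notin> R" by (simp add: R_def)
  have "P - {b} = insert e R" using e by (auto simp: R_def)
  thus ?thesis using card_subsets_of_weight_two_three[OF finR twoR' eR we] cardR by simp
qed

text \<open>For odd half weight each half contains a block of odd weight. Removing one such block
  leaves at most \<open>2t - 2\<close> blocks, and Sperner applies, unless there are \<open>2t\<close> blocks; then a
  second odd block forces the weights \<open>3, 3, 2, \<dots>, 2\<close>.\<close>

lemma card_half_weight_subsets_odd_le:
  assumes fin: "finite P" and two: "\<forall>b\<in>P. 2 \<le> w b" and total: "sum w P = 2 * (2 * t + 1)"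
  shows "card (subsets_of_weight w P (2 * t + 1)) \<le> 2 * ((2 * t - 2) choose (t - 1))"
proof (cases "subsets_of_weight w P (2 * t + 1) = {}")
  case False
  then obtain Q where "Q \<subseteq> P" "sum w Q = 2 * t + 1" by (auto simp: subsets_of_weight_def)
  then obtain b where b: "b \<in> P" "odd (w b)" using odd_weight_member[of w Q] by auto
  define G0 where "G0 = subsets_of_weight w (P - {b}) (2 * t + 1)"
  have "card G0 \<le> (2 * t - 2) choose (t - 1)"
  proof (cases "card P \<le> 2 * t - 1")
    case True
    hence "card (P - {b}) \<le> 2 * t - 2" using b fin by simp
    hence "card G0 \<le> (2 * t - 2) choose ((2 * t - 2) div 2)"
      unfolding G0_def using fin two by (intro card_subsets_of_weight_le_central) auto
    moreover have "(2 * t - 2) div 2 = t - 1" by simp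
    ultimately show ?thesis by simp
  next
    case False
    show ?thesis
    proof (cases "G0 = {}")
      case False
      then obtain Q' where "Q' \<subseteq> P - {b}" "sum w Q' = 2 * t + 1"
        by (auto simp: G0_def subsets_of_weight_def)
      then obtain e where "e \<in> P" "e \<noteq> b" "odd (w e)"
        using odd_weight_member[of w Q'] by auto
      thus ?thesis unfolding G0_def using \<open>\<not> card P \<le> 2 * t - 1\<close>
        by (intro card_subsets_of_weight_avoiding_odd_le[OF fin two total b]) auto
    qed simp
  qed
  thus ?thesis using card_subsets_of_weight_le_avoiding[OF fin b(1) total] by (simp add: G0_def)
qed simp

section \<open>Intersections of balls and cycles\<close>

definition disagree :: "nat \<Rightarrow> (nat \<Rightarrow> nat) \<Rightarrow> (nat \<Rightarrow> nat) \<Rightarrow> nat set" where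
  "disagree n p q = {i \<in> {1..n}. p i \<noteq> q i}"

lemma hdist_eq_card_disagree: "hdist n p q = card (disagree n p q)"
  by (simp add: hdist_def disagree_def)

lemma finite_disagree [simp]: "finite (disagree n p q)"
  by (simp add: disagree_def)

lemma ball_inter_structure:
  assumes p: "p \<in> Sym n" and d: "2 * r \<le> hdist n p q"
    and s: "s \<in> ball_perm n r p \<inter> ball_perm n r q"
  shows "card (disagree n p q) = 2 * r" "card (disagree n p s) = r"
    "disagree n p s \<subseteq> disagree n p q"
    "s = (\<lambda>i. if i \<in> disagree n p s then q i else p i)"
proof -
  define A B where "A = disagree n p s" and "B = disagree n q s"
  have "card A \<le> r" "card B \<le> r" using s by (auto simp: A_def B_def ball_perm_def hdist_eq_card_disagree)
  moreover have "card (disagree n p q) \<le> card (A \<union> B)"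
    by (intro card_mono) (auto simp: A_def B_def disagree_def)
  moreover have "card (A \<union> B) + card (A \<inter> B) = card A + card B"
    using card_Un_Int[of A B] by (simp add: A_def B_def)
  ultimately have "card (A \<inter> B) = 0" "card A = r" "card (disagree n p q) = 2 * r"
    using d unfolding hdist_eq_card_disagree by linarith+
  thus "card (disagree n p q) = 2 * r" "card (disagree n p s) = r" by (simp_all add: A_def)
  have disj: "A \<inter> B = {}" using \<open>card (A \<inter> B) = 0\<close> by (simp add: A_def B_def)
  have agree_q: "s i = q i" if "i \<in> A" for i
  proof -
    have "i \<notin> B" using that disj by blast
    moreover have "i \<in> {1..n}" using that by (simp add: A_def disagree_def)
    ultimately show ?thesis by (simp add: B_def disagree_def)
  qed
  show "disagree n p s \<subseteq> disagree n p q"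
  proof
    fix i assume "i \<in> disagree n p s"
    thus "i \<in> disagree n p q" using agree_q[of i] by (simp add: A_def disagree_def)
  qed
  have "s i = (if i \<in> A then q i else p i)" for i
  proof (cases "i \<in> {1..n}")
    case True thus ?thesis using agree_q by (simp add: A_def disagree_def)
  next
    case False
    moreover have "s permutes {1..n}" using s by (simp add: ball_perm_def Sym_def)
    ultimately show ?thesis using p by (simp add: A_def disagree_def Sym_def permutes_not_in)
  qed
  thus "s = (\<lambda>i. if i \<in> disagree n p s then q i else p i)" by (auto simp: A_def)
qed

lemma orbit_subset_if_invariant:
  assumes "f ` A \<subseteq> A" "x \<in> A" shows "orbit f x \<subseteq> A"
proof
  fix y assume "y \<in> orbit f x" thus "y \<in> A" by induct (use assms in auto)
qed

lemma pairwise_disjnt_orbits: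
  assumes "permutation f" shows "pairwise disjnt (orbit f ` D)"
proof (rule pairwiseI)
  fix b b' assume "b \<in> orbit f ` D" "b' \<in> orbit f ` D" "b \<noteq> b'"
  moreover have "orbit f y = orbit f x" if "y \<in> orbit f x" for x y
    by (rule orbit_cyclic_eq3[OF cyclic_on_orbit'[OF assms] that])
  ultimately show "disjnt b b'" unfolding disjnt_def by blast
qed

lemma Union_orbits_subset_eq:
  assumes "permutation f" "f ` A \<subseteq> A" "A \<subseteq> D"
  shows "\<Union>{b \<in> orbit f ` D. b \<subseteq> A} = A"
proof
  show "A \<subseteq> \<Union>{b \<in> orbit f ` D. b \<subseteq> A}"
  proof
    fix x assume "x \<in> A"
    hence "orbit f x \<in> orbit f ` D" "orbit f x \<subseteq> A" "x \<in> orbit f x"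
      using assms(3) orbit_subset_if_invariant[OF assms(2)] permutation_self_in_orbit[OF assms(1)]
      by auto
    thus "x \<in> \<Union>{b \<in> orbit f ` D. b \<subseteq> A}" by blast
  qed
qed blast

lemma card_orbit_ge_two:
  assumes "permutation f" "f x \<noteq> x" "finite (orbit f x)"
  shows "2 \<le> card (orbit f x)"
proof -
  have "{x, f x} \<subseteq> orbit f x" using permutation_self_in_orbit[OF assms(1)] by (auto intro: orbit.base)
  hence "card {x, f x} \<le> card (orbit f x)" by (intro card_mono assms(3))
  thus ?thesis using assms(2) by simp
qed

lemma sum_card_orbits_subset:
  assumes "permutation f" "f ` D \<subseteq> D" "finite D" "f ` A \<subseteq> A" "A \<subseteq> D"
  shows "sum card {b \<in> orbit f ` D. b \<subseteq> A} = card A"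
proof -
  have "finite b" if "b \<in> orbit f ` D" for b
    using that orbit_subset_if_invariant[OF assms(2)] finite_subset[OF _ assms(3)] by blast
  hence "card (\<Union>{b \<in> orbit f ` D. b \<subseteq> A}) = sum card {b \<in> orbit f ` D. b \<subseteq> A}"
    using pairwise_subset[OF pairwise_disjnt_orbits[OF assms(1), of D]]
    by (intro card_Union_disjoint) auto
  thus ?thesis using Union_orbits_subset_eq[OF assms(1,4,5)] by simp
qed

lemma inv_comp_disagree:
  assumes "p \<in> Sym n" "q \<in> Sym n" "i \<in> disagree n p q"
  shows "(inv p \<circ> q) i \<noteq> i" "(inv p \<circ> q) i \<in> disagree n p q"
proof -
  have pS: "p permutes {1..n}" and qS: "q permutes {1..n}" using assms by (simp_all add: Sym_def)
  have p_comp: "p ((inv p \<circ> q) j) = q j" for j by (simp add: permutes_inverses(1)[OF pS])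
  show moves: "(inv p \<circ> q) i \<noteq> i"
  proof
    assume "(inv p \<circ> q) i = i"
    hence "p i = q i" using p_comp[of i] by simp
    thus False using assms(3) by (simp add: disagree_def)
  qed
  hence "q ((inv p \<circ> q) i) \<noteq> q i" using permutes_inj[OF qS] by (simp add: inj_eq)
  hence "p ((inv p \<circ> q) i) \<noteq> q ((inv p \<circ> q) i)" using p_comp[of i] by simp
  moreover have "(inv p \<circ> q) i \<in> {1..n}"
    using assms(3) permutes_in_image[OF permutes_compose[OF qS permutes_inv[OF pS]]]
    by (simp add: disagree_def)
  ultimately show "(inv p \<circ> q) i \<in> disagree n p q" by (simp add: disagree_def)
qed

lemma inv_comp_image_disagree_subset:
  assumes p: "p \<in> Sym n" and q: "q \<in> Sym n" and d: "2 * r \<le> hdist n p q"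
    and s: "s \<in> ball_perm n r p \<inter> ball_perm n r q"
  shows "(inv p \<circ> q) ` disagree n p s \<subseteq> disagree n p s"
proof clarify
  fix i assume i: "i \<in> disagree n p s"
  let ?\<rho> = "inv p \<circ> q"
  note s_structure = ball_inter_structure[OF p d s]
  have "i \<in> disagree n p q" using i s_structure(3) by blast
  note \<rho>_i = inv_comp_disagree[OF p q this]
  have "s (?\<rho> i) \<noteq> p (?\<rho> i)"
  proof
    assume "s (?\<rho> i) = p (?\<rho> i)"
    also have "\<dots> = q i" using p by (simp add: Sym_def permutes_inverses(1))
    also have "\<dots> = s i" using i s_structure(4) by metis
    moreover have "inj s" using s permutes_inj by (auto simp: ball_perm_def Sym_def)
    ultimately show False using \<rho>_i(1) by (simp add: inj_eq)
  qed
  thus "?\<rho> i \<in> disagree n p s" using \<rho>_i(2) by (simp add: disagree_def)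
qed

lemma card_ball_inter_le_orbit_subsets:
  assumes p: "p \<in> Sym n" and q: "q \<in> Sym n" and d: "2 * r \<le> hdist n p q"
    and ne: "ball_perm n r p \<inter> ball_perm n r q \<noteq> {}"
  obtains P :: "nat set set"
  where "finite P" "\<forall>b\<in>P. 2 \<le> card b" "sum card P = 2 * r"
    "card (ball_perm n r p \<inter> ball_perm n r q) \<le> card (subsets_of_weight card P r)"
proof
  define X where "X = ball_perm n r p \<inter> ball_perm n r q"
  define D where "D = disagree n p q"
  define \<rho> where "\<rho> = inv p \<circ> q"
  define P where "P = orbit \<rho> ` D"
  have \<rho>: "permutation \<rho>" unfolding \<rho>_def using p q
    by (intro permutes_imp_permutation[of "{1..n}"] permutes_compose permutes_inv) (simp_all add: Sym_def)
  have D_inv: "\<rho> ` D \<subseteq> D" using inv_comp_disagree(2)[OF p q] by (auto simp: \<rho>_def D_def)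
  have blocks_subset: "b \<subseteq> D" if "b \<in> P" for b
    using that orbit_subset_if_invariant[OF D_inv] by (auto simp: P_def)
  show "finite P" by (simp add: P_def D_def)
  show "\<forall>b\<in>P. 2 \<le> card b"
    using card_orbit_ge_two[OF \<rho>] inv_comp_disagree(1)[OF p q] blocks_subset finite_subset
    by (fastforce simp: P_def D_def \<rho>_def)
  obtain s0 where "s0 \<in> X" using ne by (auto simp: X_def)
  hence "card D = 2 * r" using ball_inter_structure[OF p d] by (simp add: X_def D_def)
  moreover have "{b \<in> P. b \<subseteq> D} = P" using blocks_subset by blast
  ultimately show "sum card P = 2 * r"
    using sum_card_orbits_subset[OF \<rho> D_inv _ D_inv subset_refl] by (simp add: P_def D_def)
  have invariant: "\<rho> ` disagree n p s \<subseteq> disagree n p s" "disagree n p s \<subseteq> D" if "s \<in> X" for s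
    using inv_comp_image_disagree_subset[OF p q d] ball_inter_structure(3)[OF p d] that
    by (auto simp: X_def \<rho>_def D_def)
  have "card X \<le> card (subsets_of_weight card P r)"
  proof (rule card_inj_on_le)
    show "inj_on (\<lambda>s. {b \<in> P. b \<subseteq> disagree n p s}) X"
    proof (rule inj_onI)
      fix s s' assume "s \<in> X" "s' \<in> X" "{b \<in> P. b \<subseteq> disagree n p s} = {b \<in> P. b \<subseteq> disagree n p s'}"
      hence "disagree n p s = disagree n p s'"
        using Union_orbits_subset_eq[OF \<rho> invariant] unfolding P_def by metis
      thus "s = s'" using ball_inter_structure(4)[OF p d] \<open>s \<in> X\<close> \<open>s' \<in> X\<close>
        unfolding X_def by metis
    qed
    show "(\<lambda>s. {b \<in> P. b \<subseteq> disagree n p s}) ` X \<subseteq> subsets_of_weight card P r"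
      using sum_card_orbits_subset[OF \<rho> D_inv _ invariant] ball_inter_structure(2)[OF p d]
      by (auto simp: subsets_of_weight_def P_def D_def X_def)
    show "finite (subsets_of_weight card P r)" by (simp add: finite_subsets_of_weight P_def D_def)
  qed
  thus "card (ball_perm n r p \<inter> ball_perm n r q) \<le> card (subsets_of_weight card P r)"
    by (simp add: X_def)
qed

section \<open>Extremal pairs\<close>

lemma perm_restrict_permutes:
  assumes "inj f" "finite A" "f ` A \<subseteq> A"
  shows "perm_restrict f A permutes A"
proof (rule bij_imp_permutes)
  have "f ` A = A" using endo_inj_surj[OF assms(2,3)] inj_on_subset[OF assms(1)] by blast
  hence "bij_betw f A A" using inj_on_subset[OF assms(1) subset_UNIV] by (simp add: bij_betw_def)
  thus "bij_betw (perm_restrict f A) A A" by (rule bij_betw_cong[THEN iffD1, rotated]) (simp add: perm_restrict_def)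
qed (simp add: perm_restrict_def)

lemma disagree_perm_restrict:
  assumes "A \<subseteq> disagree n id \<tau>"
  shows "disagree n id (perm_restrict \<tau> A) = A"
    and "disagree n \<tau> (perm_restrict \<tau> A) = disagree n id \<tau> - A"
  using assms by (auto simp: disagree_def perm_restrict_def)

lemma card_invariant_halves_le_ball_inter:
  assumes \<tau>: "\<tau> \<in> Sym n" and D: "card (disagree n id \<tau>) = 2 * r"
  shows "card {A. A \<subseteq> disagree n id \<tau> \<and> \<tau> ` A \<subseteq> A \<and> card A = r}
           \<le> card (ball_perm n r id \<inter> ball_perm n r \<tau>)"
proof (rule card_inj_on_le)
  let ?H = "{A. A \<subseteq> disagree n id \<tau> \<and> \<tau> ` A \<subseteq> A \<and> card A = r}"
  show "inj_on (perm_restrict \<tau>) ?H"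
  proof (rule inj_onI)
    fix A A' assume "A \<in> ?H" "A' \<in> ?H" "perm_restrict \<tau> A = perm_restrict \<tau> A'"
    thus "A = A'" using disagree_perm_restrict(1)[of A n \<tau>] disagree_perm_restrict(1)[of A' n \<tau>]
      by (metis (mono_tags, lifting) mem_Collect_eq)
  qed
  show "perm_restrict \<tau> ` ?H \<subseteq> ball_perm n r id \<inter> ball_perm n r \<tau>"
  proof (rule image_subsetI)
    fix A assume "A \<in> ?H"
    hence A: "A \<subseteq> disagree n id \<tau>" "\<tau> ` A \<subseteq> A" "card A = r" by auto
    have "finite A" using finite_subset[OF A(1)] by simp
    moreover have "inj \<tau>" using \<tau> by (simp add: Sym_def permutes_inj)
    ultimately have "perm_restrict \<tau> A permutes {1..n}"
      using A by (intro permutes_subset[OF perm_restrict_permutes]) (auto simp: disagree_def)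
    moreover have "card (disagree n id \<tau> - A) = r" using A D \<open>finite A\<close> by (simp add: card_Diff_subset)
    ultimately show "perm_restrict \<tau> A \<in> ball_perm n r id \<inter> ball_perm n r \<tau>"
      using \<tau> A disagree_perm_restrict[OF A(1)]
      by (simp add: ball_perm_def Sym_def hdist_eq_card_disagree)
  qed
  have "finite (Sym n)" by (simp add: Sym_def finite_permutations)
  thus "finite (ball_perm n r id \<inter> ball_perm n r \<tau>)" by (simp add: ball_perm_def)
qed

lemma inj_on_Union_blocks:
  assumes "disjoint_family_on B K" "\<forall>k\<in>K. B k \<noteq> {}"
  shows "inj_on (\<lambda>J. \<Union>(B ` J)) (Pow K)"
proof -
  have "J \<subseteq> J'" if J: "J \<subseteq> K" "J' \<subseteq> K" "\<Union>(B ` J) = \<Union>(B ` J')" for J J'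
  proof
    fix k assume "k \<in> J"
    hence "B k \<noteq> {}" using assms(2) J(1) by blast
    then obtain x where "x \<in> B k" by blast
    hence "x \<in> \<Union>(B ` J')" using J(3) \<open>k \<in> J\<close> by blast
    then obtain k' where "k' \<in> J'" "x \<in> B k'" by blast
    hence "B k \<inter> B k' \<noteq> {}" using \<open>x \<in> B k\<close> by blast
    hence "k = k'" using disjoint_family_onD[OF assms(1)] J(1,2) \<open>k \<in> J\<close> \<open>k' \<in> J'\<close> by blast
    thus "k \<in> J'" using \<open>k' \<in> J'\<close> by simp
  qed
  thus ?thesis by (intro inj_onI) (simp add: subset_antisym)
qed

lemma card_le_invariant_block_unions:
  assumes "finite K" "disjoint_family_on B K"
    and blocks: "\<forall>k\<in>K. B k \<noteq> {} \<and> finite (B k) \<and> \<tau> ` B k \<subseteq> B k"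
    and JJ: "\<forall>J\<in>JJ. J \<subseteq> K \<and> (\<Sum>k\<in>J. card (B k)) = r"
  shows "card JJ \<le> card {A. A \<subseteq> \<Union>(B ` K) \<and> \<tau> ` A \<subseteq> A \<and> card A = r}"
proof (rule card_inj_on_le)
  have "JJ \<subseteq> Pow K" and "\<forall>k\<in>K. B k \<noteq> {}" using JJ blocks by auto
  thus "inj_on (\<lambda>J. \<Union>(B ` J)) JJ" using inj_on_Union_blocks[OF assms(2)] inj_on_subset by blast
  show "(\<lambda>J. \<Union>(B ` J)) ` JJ \<subseteq> {A. A \<subseteq> \<Union>(B ` K) \<and> \<tau> ` A \<subseteq> A \<and> card A = r}"
  proof (rule image_subsetI)
    fix J assume "J \<in> JJ"
    hence J: "J \<subseteq> K" "(\<Sum>k\<in>J. card (B k)) = r" using JJ by auto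
    have "card (\<Union>(B ` J)) = (\<Sum>k\<in>J. card (B k))"
      using disjoint_family_on_mono[OF J(1) assms(2)] finite_subset[OF J(1) assms(1)] blocks J(1)
      by (intro card_UN_disjoint) (auto simp: disjoint_family_on_def)
    moreover have "\<tau> ` \<Union>(B ` J) \<subseteq> \<Union>(B ` J)"
    proof clarify
      fix k x assume "k \<in> J" "x \<in> B k"
      hence "\<tau> x \<in> B k" using blocks J(1) by blast
      thus "\<tau> x \<in> \<Union>(B ` J)" using \<open>k \<in> J\<close> by blast
    qed
    moreover have "\<Union>(B ` J) \<subseteq> \<Union>(B ` K)" using J(1) by blast
    ultimately show "\<Union>(B ` J) \<in> {A. A \<subseteq> \<Union>(B ` K) \<and> \<tau> ` A \<subseteq> A \<and> card A = r}"
      using J(2) by simp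
  qed
  show "finite {A. A \<subseteq> \<Union>(B ` K) \<and> \<tau> ` A \<subseteq> A \<and> card A = r}"
    by (rule finite_subset[of _ "Pow (\<Union>(B ` K))"]) (use assms(1) blocks in auto)
qed

lemma permutesI_inverse:
  assumes "\<And>x. g (f x) = x" "\<And>y. f (g y) = y" "\<And>x. x \<notin> S \<Longrightarrow> f x = x"
  shows "f permutes S"
  unfolding permutes_def using assms by metis

definition tau_even :: "nat \<Rightarrow> nat \<Rightarrow> nat" where
  "tau_even t i = (if 1 \<le> i \<and> i \<le> 4 * t then if odd i then i + 1 else i - 1 else i)"

lemma tau_even_involution: "tau_even t (tau_even t i) = i"
  unfolding tau_even_def by presburger

lemma tau_even_in_Sym:
  assumes "4 * t \<le> n" shows "tau_even t \<in> Sym n"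
  unfolding Sym_def mem_Collect_eq
proof (rule permutesI_inverse[where g = "tau_even t"])
  show "tau_even t x = x" if "x \<notin> {1..n}" for x using that assms by (auto simp: tau_even_def)
qed (rule tau_even_involution)+

lemma disagree_tau_even: "4 * t \<le> n \<Longrightarrow> disagree n id (tau_even t) = {1..4 * t}"
  by (auto simp: disagree_def tau_even_def)

lemma card_ball_inter_tau_even:
  assumes "4 * t \<le> n"
  shows "(2 * t) choose t \<le> card (ball_perm n (2 * t) id \<inter> ball_perm n (2 * t) (tau_even t))"
proof -
  define B :: "nat \<Rightarrow> nat set" where "B k = {2 * k - 1, 2 * k}" for k
  define K where "K = {1..2 * t}"
  have "\<Union>(B ` K) = {1..4 * t}"
  proof (intro equalityI subsetI)
    fix i assume "i \<in> {1..4 * t}"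
    hence "(i + 1) div 2 \<in> K" "i \<in> B ((i + 1) div 2)" by (auto simp: K_def B_def)
    thus "i \<in> \<Union>(B ` K)" by blast
  qed (auto simp: B_def K_def)
  hence support: "disagree n id (tau_even t) = \<Union>(B ` K)" using disagree_tau_even[OF assms] by simp
  have "card (B k) = 2" if "k \<in> K" for k using that by (auto simp: B_def K_def)
  hence weight: "(\<Sum>k\<in>J. card (B k)) = 2 * card J" if "J \<subseteq> K" for J
    using that by (simp add: subset_iff)
  have "card {J. J \<subseteq> K \<and> card J = t}
          \<le> card {A. A \<subseteq> disagree n id (tau_even t) \<and> tau_even t ` A \<subseteq> A \<and> card A = 2 * t}"
    unfolding support using weight
    by (intro card_le_invariant_block_unions)
      (auto simp: K_def B_def disjoint_family_on_def tau_even_def)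
  also have "\<dots> \<le> card (ball_perm n (2 * t) id \<inter> ball_perm n (2 * t) (tau_even t))"
    using assms by (intro card_invariant_halves_le_ball_inter tau_even_in_Sym) (simp_all add: disagree_tau_even[OF assms])
  finally show ?thesis by (simp add: n_subsets K_def)
qed

definition tau_odd :: "nat \<Rightarrow> nat \<Rightarrow> nat" where
  "tau_odd t i = (if i \<in> {1, 2, 4, 5} then i + 1 else if i \<in> {3, 6} then i - 2
     else if 7 \<le> i \<and> i \<le> 4 * t + 2 then if odd i then i + 1 else i - 1 else i)"

lemma tau_odd_in_Sym:
  assumes "1 \<le> t" "4 * t + 2 \<le> n" shows "tau_odd t \<in> Sym n"
proof -
  define g where "g i = (if i \<in> {2, 3, 5, 6} then i - 1 else if i \<in> {1, 4} then i + 2 else tau_odd t i)" for i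
  have "g (tau_odd t i) = i \<and> tau_odd t (g i) = i" for i
  proof (cases "i \<le> 6")
    case True
    hence "i = 0 \<or> i = 1 \<or> i = 2 \<or> i = 3 \<or> i = 4 \<or> i = 5 \<or> i = 6" by linarith
    thus ?thesis by (elim disjE) (simp_all add: g_def tau_odd_def)
  next
    case False
    have swap: "tau_odd t j = (if j \<le> 4 * t + 2 then if odd j then j + 1 else j - 1 else j)"
      if "6 < j" for j using that by (simp add: tau_odd_def)
    have "6 < tau_odd t i" using False by (auto simp: swap)
    thus ?thesis using False by (auto simp: g_def swap) presburger+
  qed
  moreover have "tau_odd t i = i" if "i \<notin> {1..n}" for i using that assms by (auto simp: tau_odd_def)
  ultimately show ?thesis unfolding Sym_def mem_Collect_eq by (intro permutesI_inverse[of g]) auto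
qed

lemma disagree_tau_odd:
  assumes "1 \<le> t" "4 * t + 2 \<le> n" shows "disagree n id (tau_odd t) = {1..4 * t + 2}"
  using assms by (auto simp: disagree_def tau_odd_def)

definition tau_odd_block :: "nat \<Rightarrow> nat set" where
  "tau_odd_block k = (if k = 0 then {1, 2, 3} else if k = 1 then {4, 5, 6} else {2 * k + 3, 2 * k + 4})"

lemma Union_tau_odd_blocks:
  assumes "1 \<le> t" shows "\<Union>(tau_odd_block ` {0..2 * t - 1}) = {1..4 * t + 2}"
proof (intro equalityI subsetI)
  fix i assume i: "i \<in> {1..4 * t + 2}"
  show "i \<in> \<Union>(tau_odd_block ` {0..2 * t - 1})"
  proof (cases "i \<le> 6")
    case True
    hence "i \<in> tau_odd_block 0 \<union> tau_odd_block 1" using i by (auto simp: tau_odd_block_def)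
    moreover have "0 \<in> {0..2 * t - 1}" "1 \<in> {0..2 * t - 1}" using assms by auto
    ultimately show ?thesis by blast
  next
    case False
    define k where "k = (i - 3) div 2"
    have "2 \<le> k" "k \<le> 2 * t - 1" "i = 2 * k + 3 \<or> i = 2 * k + 4"
      using False i unfolding k_def by auto
    hence "k \<in> {0..2 * t - 1}" "i \<in> tau_odd_block k" by (auto simp: tau_odd_block_def)
    thus ?thesis by blast
  qed
next
  fix i assume "i \<in> \<Union>(tau_odd_block ` {0..2 * t - 1})"
  then obtain k where "k \<in> {0..2 * t - 1}" "i \<in> tau_odd_block k" by blast
  thus "i \<in> {1..4 * t + 2}" using assms by (cases "k = 0"; cases "k = 1") (auto simp: tau_odd_block_def)
qed

lemma card_insert_image_Un:
  assumes "finite S" "\<forall>J\<in>S. a \<notin> J \<and> b \<notin> J" "a \<noteq> b"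
  shows "card (insert a ` S \<union> insert b ` S) = 2 * card S"
proof -
  have card_insert_image: "card (insert c ` S) = card S" if "c \<in> {a, b}" for c
  proof (rule card_image, rule inj_onI)
    fix J J' assume "J \<in> S" "J' \<in> S" "insert c J = insert c J'"
    thus "J = J'" using assms(2) that by (metis insert_ident insert_iff singletonD)
  qed
  have "a \<notin> X" if "X \<in> insert b ` S" for X using that assms(2,3) by auto
  moreover have "a \<in> X" if "X \<in> insert a ` S" for X using that by auto
  ultimately have "insert a ` S \<inter> insert b ` S = {}" by blast
  hence "card (insert a ` S \<union> insert b ` S) = card (insert a ` S) + card (insert b ` S)"
    using assms(1) by (intro card_Un_disjoint) simp_all
  thus ?thesis using card_insert_image by simp
qed

text \<open>Every choice of one 3-cycle and \<open>t - 1\<close> of the transpositions of tau_odd t gives an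
  invariant half of its support.\<close>

lemma card_ball_inter_tau_odd:
  assumes t: "1 \<le> t" and n: "4 * t + 2 \<le> n"
  shows "2 * ((2 * t - 2) choose (t - 1))
           \<le> card (ball_perm n (2 * t + 1) id \<inter> ball_perm n (2 * t + 1) (tau_odd t))"
proof -
  define S where "S = {J. J \<subseteq> {2..2 * t - 1} \<and> card J = t - 1}"
  define JJ where "JJ = insert 0 ` S \<union> insert 1 ` S"
  have weight: "(\<Sum>k\<in>insert c J. card (tau_odd_block k)) = 2 * t + 1" if "c \<in> {0, 1}" "J \<in> S" for c J
  proof -
    have "card (tau_odd_block k) = 2" if "k \<in> J" for k
      using that \<open>J \<in> S\<close> by (auto simp: tau_odd_block_def S_def)
    hence "(\<Sum>k\<in>J. card (tau_odd_block k)) = 2 * (t - 1)" using \<open>J \<in> S\<close> by (simp add: S_def)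
    moreover have "c \<notin> J" "finite J" "card (tau_odd_block c) = 3"
      using that by (auto simp: S_def tau_odd_block_def finite_subset)
    ultimately show ?thesis using t by simp
  qed
  have "card JJ = 2 * ((2 * t - 2) choose (t - 1))"
    unfolding JJ_def using t by (subst card_insert_image_Un) (auto simp: S_def n_subsets)
  moreover have "card JJ \<le> card {A. A \<subseteq> disagree n id (tau_odd t) \<and> tau_odd t ` A \<subseteq> A \<and> card A = 2 * t + 1}"
    unfolding disagree_tau_odd[OF t n] Union_tau_odd_blocks[OF t, symmetric] using weight t
    by (intro card_le_invariant_block_unions)
      (auto simp: JJ_def S_def disjoint_family_on_def tau_odd_block_def tau_odd_def)
  moreover have "card {A. A \<subseteq> disagree n id (tau_odd t) \<and> tau_odd t ` A \<subseteq> A \<and> card A = 2 * t + 1}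
      \<le> card (ball_perm n (2 * t + 1) id \<inter> ball_perm n (2 * t + 1) (tau_odd t))"
    using t n by (intro card_invariant_halves_le_ball_inter tau_odd_in_Sym)
      (simp_all add: disagree_tau_odd[OF t n])
  ultimately show ?thesis by linarith
qed

lemma card_ball_inter_le_even:
  assumes "p \<in> Sym n" "q \<in> Sym n" "2 * (2 * t) \<le> hdist n p q"
  shows "card (ball_perm n (2 * t) p \<inter> ball_perm n (2 * t) q) \<le> (2 * t) choose t"
proof (cases "ball_perm n (2 * t) p \<inter> ball_perm n (2 * t) q = {}")
  case False
  then obtain P :: "nat set set" where "finite P" "\<forall>b\<in>P. 2 \<le> card b" "sum card P = 2 * (2 * t)"
    "card (ball_perm n (2 * t) p \<inter> ball_perm n (2 * t) q) \<le> card (subsets_of_weight card P (2 * t))"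
    using card_ball_inter_le_orbit_subsets[OF assms] by blast
  thus ?thesis using card_half_weight_subsets_le[of P card "2 * t"] by simp
qed simp

lemma card_ball_inter_le_odd:
  assumes "p \<in> Sym n" "q \<in> Sym n" "2 * (2 * t + 1) \<le> hdist n p q"
  shows "card (ball_perm n (2 * t + 1) p \<inter> ball_perm n (2 * t + 1) q)
           \<le> 2 * ((2 * t - 2) choose (t - 1))"
proof (cases "ball_perm n (2 * t + 1) p \<inter> ball_perm n (2 * t + 1) q = {}")
  case False
  then obtain P :: "nat set set" where "finite P" "\<forall>b\<in>P. 2 \<le> card b" "sum card P = 2 * (2 * t + 1)"
    "card (ball_perm n (2 * t + 1) p \<inter> ball_perm n (2 * t + 1) q)
       \<le> card (subsets_of_weight card P (2 * t + 1))"
    using card_ball_inter_le_orbit_subsets[OF assms] by blast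
  thus ?thesis using card_half_weight_subsets_odd_le[of P card t] by simp
qed simp

lemma Nint_eqI:
  assumes upper: "\<And>p q. p \<in> Sym n \<Longrightarrow> q \<in> Sym n \<Longrightarrow> d \<le> hdist n p q \<Longrightarrow>
                    card (ball_perm n r p \<inter> ball_perm n r q) \<le> b"
    and "p \<in> Sym n" "q \<in> Sym n" "d \<le> hdist n p q"
    and "b \<le> card (ball_perm n r p \<inter> ball_perm n r q)"
  shows "Nint n d r = b"
  unfolding Nint_def
proof (rule Max_eqI)
  let ?V = "{card (ball_perm n r p \<inter> ball_perm n r q) | p q.
               p \<in> Sym n \<and> q \<in> Sym n \<and> d \<le> hdist n p q}"
  have "?V \<subseteq> {..b}" using upper by auto
  thus "finite (insert 0 ?V)" using finite_subset[of ?V "{..b}"] by simp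
  show "y \<le> b" if "y \<in> insert 0 ?V" for y using that upper by auto
  show "b \<in> insert 0 ?V" using assms(2-5) upper[OF assms(2-4)] le_antisym by blast
qed

lemma id_in_Sym: "id \<in> Sym n"
  by (simp add: Sym_def permutes_id)

lemma Nint_even_radius:
  assumes n: "4 * t \<le> n"
  shows "Nint n (2 * (2 * t)) (2 * t) = (2 * t) choose t"
proof (rule Nint_eqI)
  show "card (ball_perm n (2 * t) p \<inter> ball_perm n (2 * t) q) \<le> (2 * t) choose t"
    if "p \<in> Sym n" "q \<in> Sym n" "2 * (2 * t) \<le> hdist n p q" for p q
    using card_ball_inter_le_even[OF that] .
  show "2 * (2 * t) \<le> hdist n id (tau_even t)"
    using n by (simp add: hdist_eq_card_disagree disagree_tau_even)
  show "(2 * t) choose t \<le> card (ball_perm n (2 * t) id \<inter> ball_perm n (2 * t) (tau_even t))"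
    by (rule card_ball_inter_tau_even[OF n])
qed (simp_all add: id_in_Sym tau_even_in_Sym[OF n])

lemma Nint_odd_radius:
  assumes t: "1 \<le> t" and n: "4 * t + 2 \<le> n"
  shows "Nint n (2 * (2 * t + 1)) (2 * t + 1) = 2 * ((2 * t - 2) choose (t - 1))"
proof (rule Nint_eqI)
  show "card (ball_perm n (2 * t + 1) p \<inter> ball_perm n (2 * t + 1) q)
          \<le> 2 * ((2 * t - 2) choose (t - 1))"
    if "p \<in> Sym n" "q \<in> Sym n" "2 * (2 * t + 1) \<le> hdist n p q" for p q
    using card_ball_inter_le_odd[OF that] .
  show "2 * (2 * t + 1) \<le> hdist n id (tau_odd t)"
    by (simp add: hdist_eq_card_disagree disagree_tau_odd[OF t n])
  show "2 * ((2 * t - 2) choose (t - 1))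
          \<le> card (ball_perm n (2 * t + 1) id \<inter> ball_perm n (2 * t + 1) (tau_odd t))"
    by (rule card_ball_inter_tau_odd[OF t n])
qed (simp_all add: id_in_Sym tau_odd_in_Sym[OF t n])

theorem theorem1:
  fixes t r n :: nat
  assumes "t \<ge> 2" and "r = 2*t \<or> r = 2*t + 1" and "n \<ge> 2*r"
  shows "Nint n (2*r) r =
    (if r = 2*t then (2*t) choose t else 2 * ((2*t - 2) choose (t - 1)))"
proof (cases "r = 2 * t")
  case True
  thus ?thesis using Nint_even_radius[of t n] assms(3) by simp
next
  case False
  hence "r = 2 * t + 1" using assms(2) by simp
  thus ?thesis using Nint_odd_radius[of t n] assms(1,3) by simp
qed

end
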